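(* Let $(A,\leq,\cdot,/)$ be a right-residuated magma satisfying condition (N), and let $B\subseteq A$ be closed under $\sqcap$. The following are equivalent: (1) $(B,\sqcap)$ is a semilattice; (2) $\sqcap$ is commutative on $B$; (3) for all $x,y\in B$, $(x\sqcap y)\sqcap x = x\sqcap y$ and $x\sqcap y\leq y$.
   Context: Write $xy$ for $x\cdot y$; $\cdot$ binds more strongly than $/$, and $/$ binds more strongly than $\sqcap$, where $x\sqcap y := (x/y)y$. A right-residuated magma is a structure $(A,\leq,\cdot,/)$ where $(A,\leq)$ is a poset and $xy\leq z\iff x\leq z/y$ for all $x,y,z\in A$. Condition (N): for all $x,y\in A$, $x\leq y\iff x = y\sqcap x$. *)

theory Defs
  imports Main
begin

definition right_residuated :: "('a::order \<Rightarrow> 'a \<Rightarrow> 'a) \<Rightarrow> ('a \<Rightarrow> 'a \<Rightarrow> 'a) \<Rightarrow> bool" where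
  "right_residuated mult rdiv \<longleftrightarrow>
     (\<forall>x y z. mult x y \<le> z \<longleftrightarrow> x \<le> rdiv z y)"

definition meetop :: "('a \<Rightarrow> 'a \<Rightarrow> 'a) \<Rightarrow> ('a \<Rightarrow> 'a \<Rightarrow> 'a) \<Rightarrow> 'a \<Rightarrow> 'a \<Rightarrow> 'a" where
  "meetop mult rdiv x y = mult (rdiv x y) y"

definition condN :: "('a::order \<Rightarrow> 'a \<Rightarrow> 'a) \<Rightarrow> ('a \<Rightarrow> 'a \<Rightarrow> 'a) \<Rightarrow> bool" where
  "condN mult rdiv \<longleftrightarrow> (\<forall>x y. x \<le> y \<longleftrightarrow> x = meetop mult rdiv y x)"

definition closed_under :: "'a set \<Rightarrow> ('a \<Rightarrow> 'a \<Rightarrow> 'a) \<Rightarrow> bool" where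
  "closed_under B f \<longleftrightarrow> (\<forall>x\<in>B. \<forall>y\<in>B. f x y \<in> B)"

definition semilattice_on :: "'a set \<Rightarrow> ('a \<Rightarrow> 'a \<Rightarrow> 'a) \<Rightarrow> bool" where
  "semilattice_on B f \<longleftrightarrow>
     (\<forall>x\<in>B. \<forall>y\<in>B. \<forall>z\<in>B. f (f x y) z = f x (f y z)) \<and>
     (\<forall>x\<in>B. \<forall>y\<in>B. f x y = f y x) \<and>
     (\<forall>x\<in>B. f x x = x)"

end

theory Submission
  imports Defs
begin

text \<open>Residuation makes \<open>x \<sqcap> y\<close> a lower bound of \<open>x\<close> that is monotone in \<open>x\<close>, and (N)
  turns \<open>z \<le> y\<close> into \<open>z = y \<sqcap> z\<close>. Once \<open>\<sqcap>\<close> commutes on \<open>B\<close> it is therefore the greatest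
  lower bound there, and an operation computing infima is a semilattice operation. Conversely
  (3) gives \<open>x \<sqcap> y = (x \<sqcap> y) \<sqcap> x \<le> y \<sqcap> x\<close>, and symmetry yields commutativity.\<close>

lemma meetop_le_left:
  assumes "right_residuated m r"
  shows "meetop m r x y \<le> x"
  using assms unfolding right_residuated_def meetop_def by blast

lemma meetop_mono_left:
  assumes "right_residuated m r" and "x \<le> x'"
  shows "meetop m r x y \<le> meetop m r x' y"
proof -
  have "r x y \<le> r x' y"
    using assms meetop_le_left[OF assms(1)] unfolding right_residuated_def meetop_def
    by (meson order_trans)
  then show ?thesis
    using assms(1) unfolding right_residuated_def meetop_def by (meson order_trans order_refl)
qed

lemma condN_meetop_eq:
  assumes "condN m r" and "x \<le> y"
  shows "meetop m r y x = x"
  using assms unfolding condN_def by metis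

lemma semilattice_on_if_infimum:
  fixes f :: "'a::order \<Rightarrow> 'a \<Rightarrow> 'a"
  assumes closed: "closed_under B f"
    and lower: "\<And>x y. x \<in> B \<Longrightarrow> y \<in> B \<Longrightarrow> f x y \<le> x \<and> f x y \<le> y"
    and greatest: "\<And>x y z. x \<in> B \<Longrightarrow> y \<in> B \<Longrightarrow> z \<in> B \<Longrightarrow> z \<le> x \<Longrightarrow> z \<le> y \<Longrightarrow> z \<le> f x y"
  shows "semilattice_on B f"
proof -
  have inB: "f x y \<in> B" if "x \<in> B" "y \<in> B" for x y
    using closed that unfolding closed_under_def by blast
  have assoc: "f (f x y) z = f x (f y z)" if "x \<in> B" "y \<in> B" "z \<in> B" for x y z
    using lower greatest inB that by (meson order_antisym order_trans)
  have comm: "f x y = f y x" if "x \<in> B" "y \<in> B" for x y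
    using lower greatest inB that by (meson order_antisym)
  have idem: "f x x = x" if "x \<in> B" for x
    using lower greatest that by (meson order_antisym order_refl)
  show ?thesis
    unfolding semilattice_on_def using assoc comm idem by blast
qed

lemma semilattice_on_meetop_if_commute:
  assumes R: "right_residuated m r" and N: "condN m r"
    and closed: "closed_under B (meetop m r)"
    and comm: "\<And>x y. x \<in> B \<Longrightarrow> y \<in> B \<Longrightarrow> meetop m r x y = meetop m r y x"
  shows "semilattice_on B (meetop m r)"
proof (rule semilattice_on_if_infimum[OF closed])
  fix x y assume "x \<in> B" "y \<in> B"
  then show "meetop m r x y \<le> x \<and> meetop m r x y \<le> y"
    using comm meetop_le_left[OF R] by metis
next
  fix x y z assume B: "x \<in> B" "y \<in> B" "z \<in> B" and "z \<le> x" "z \<le> y"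
  have "z = meetop m r y z" using condN_meetop_eq[OF N \<open>z \<le> y\<close>] by simp
  also have "\<dots> = meetop m r z y" using comm B by blast
  also have "\<dots> \<le> meetop m r x y" using meetop_mono_left[OF R \<open>z \<le> x\<close>] .
  finally show "z \<le> meetop m r x y" .
qed

lemma meetop_absorb_if_commute:
  assumes R: "right_residuated m r" and N: "condN m r"
    and closed: "closed_under B (meetop m r)"
    and comm: "\<And>x y. x \<in> B \<Longrightarrow> y \<in> B \<Longrightarrow> meetop m r x y = meetop m r y x"
    and B: "x \<in> B" "y \<in> B"
  shows "meetop m r (meetop m r x y) x = meetop m r x y \<and> meetop m r x y \<le> y"
proof
  have "meetop m r (meetop m r x y) x = meetop m r x (meetop m r x y)"
    using comm B closed unfolding closed_under_def by blast
  also have "\<dots> = meetop m r x y"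
    using condN_meetop_eq[OF N meetop_le_left[OF R]] .
  finally show "meetop m r (meetop m r x y) x = meetop m r x y" .
  show "meetop m r x y \<le> y"
    using comm B meetop_le_left[OF R] by metis
qed

lemma meetop_commute_if_absorb:
  assumes R: "right_residuated m r"
    and absorb: "\<And>x y. x \<in> B \<Longrightarrow> y \<in> B \<Longrightarrow>
                   meetop m r (meetop m r x y) x = meetop m r x y \<and> meetop m r x y \<le> y"
    and B: "x \<in> B" "y \<in> B"
  shows "meetop m r x y = meetop m r y x"
proof -
  have below: "meetop m r u v \<le> meetop m r v u" if "u \<in> B" "v \<in> B" for u v
  proof -
    have "meetop m r u v = meetop m r (meetop m r u v) u" using absorb that by simp
    also have "\<dots> \<le> meetop m r v u" using meetop_mono_left[OF R] absorb that by blast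
    finally show ?thesis .
  qed
  show ?thesis using below B by (blast intro: order_antisym)
qed

theorem mainTheorem4:
  fixes mult rdiv :: "'a::order \<Rightarrow> 'a \<Rightarrow> 'a" and B :: "'a set"
  assumes "right_residuated mult rdiv"
    and "condN mult rdiv"
    and "closed_under B (meetop mult rdiv)"
  shows "(semilattice_on B (meetop mult rdiv)
            \<longleftrightarrow> (\<forall>x\<in>B. \<forall>y\<in>B. meetop mult rdiv x y = meetop mult rdiv y x))
       \<and> ((\<forall>x\<in>B. \<forall>y\<in>B. meetop mult rdiv x y = meetop mult rdiv y x)
            \<longleftrightarrow> (\<forall>x\<in>B. \<forall>y\<in>B. meetop mult rdiv (meetop mult rdiv x y) x = meetop mult rdiv x y
                                 \<and> meetop mult rdiv x y \<le> y))"
proof (intro conjI iffI)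
  show "\<forall>x\<in>B. \<forall>y\<in>B. meetop mult rdiv x y = meetop mult rdiv y x"
    if "semilattice_on B (meetop mult rdiv)"
    using that unfolding semilattice_on_def by blast
  show "semilattice_on B (meetop mult rdiv)"
    if "\<forall>x\<in>B. \<forall>y\<in>B. meetop mult rdiv x y = meetop mult rdiv y x"
    using semilattice_on_meetop_if_commute[OF assms] that by blast
  show "\<forall>x\<in>B. \<forall>y\<in>B. meetop mult rdiv (meetop mult rdiv x y) x = meetop mult rdiv x y
                       \<and> meetop mult rdiv x y \<le> y"
    if "\<forall>x\<in>B. \<forall>y\<in>B. meetop mult rdiv x y = meetop mult rdiv y x"
    using meetop_absorb_if_commute[OF assms] that by blast
  show "\<forall>x\<in>B. \<forall>y\<in>B. meetop mult rdiv x y = meetop mult rdiv y x"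
    if "\<forall>x\<in>B. \<forall>y\<in>B. meetop mult rdiv (meetop mult rdiv x y) x = meetop mult rdiv x y
                       \<and> meetop mult rdiv x y \<le> y"
    using meetop_commute_if_absorb[OF assms(1)] that by blast
qed

end
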